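(* Let $l\ge2$ and $a,b\in\mathbb{Z}_{2l}$ be such that $X=X(\mathbb{Z}_{2l},\{\pm a,\pm b\})$ is a $4$-regular circulant graph, and assume $a+b=l$ with $l\not\equiv0\pmod 4$. (i) If $l\equiv2\pmod4$, then $X$ admits perfect state transfer from $d^*e_x$ to $d^*e_{x+l}$ at time $l$, for every $x\in\mathbb{Z}_{2l}$. (ii) If $l$ is odd, then $X$ admits perfect state transfer from $d^*e_x$ to $d^*e_{x+l}$ at time $2l$, for every $x\in\mathbb{Z}_{2l}$. Moreover, if $X$ is connected, then these times are the minimum times at which perfect state transfer from $d^*e_x$ to $d^*e_{x+l}$ occurs.
   Context: For $S\subseteq\mathbb{Z}_n\setminus\{0\}$ with $S=-S$, $X(\mathbb{Z}_n,S)$ has vertex set $\mathbb{Z}_n$ and edges $\{x,y\}$ with $y-x\in S$. For a graph with symmetric arc set $\mathcal{A}$ ($t((x,y))=y$, $(x,y)^{-1}=(y,x)$): boundary matrix $d_{x,a}=\frac{1}{\sqrt{\deg x}}\delta_{x,t(a)}$, shift matrix $R_{a,b}=\delta_{a,b^{-1}}$, $U=R(2d^*d-I_{\mathcal{A}})$; $e_x$ is the standard unit vector. Perfect state transfer from $\Phi$ to a distinct state $\Psi$ at time $\tau\in\mathbb{Z}_{\ge1}$ means $U^\tau\Phi=\gamma\Psi$ for some $|\gamma|=1$. *)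

theory Defs
  imports Complex_Main
begin

text \<open>A graph is given by a vertex set V and a symmetric arc set A of pairs (x,y);
  t((x,y)) = y and (x,y)^{-1} = (y,x). Vectors in C^A are functions on pairs
  (vanishing outside A).\<close>

definition arc_deg :: "('v \<times> 'v) set \<Rightarrow> 'v \<Rightarrow> nat" where
  "arc_deg A x = card {e \<in> A. snd e = x}"

definition bd :: "('v \<times> 'v) set \<Rightarrow> 'v \<Rightarrow> 'v \<times> 'v \<Rightarrow> complex" where
  "bd A x e = (if e \<in> A \<and> snd e = x
                then complex_of_real (1 / sqrt (real (arc_deg A x))) else 0)"

definition dstar_e :: "('v \<times> 'v) set \<Rightarrow> 'v \<Rightarrow> ('v \<times> 'v \<Rightarrow> complex)" where
  "dstar_e A x = (\<lambda>e. cnj (bd A x e))"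

text \<open>U = R (2 d^* d - I), acting on vectors indexed by arcs.\<close>
definition walk_U :: "('v \<times> 'v) set \<Rightarrow> 'v set \<Rightarrow> ('v \<times> 'v \<Rightarrow> complex) \<Rightarrow> ('v \<times> 'v \<Rightarrow> complex)" where
  "walk_U A V \<phi> = (\<lambda>e. if e \<in> A then
      (let f = prod.swap e in
        2 * (\<Sum>x\<in>V. cnj (bd A x f) * (\<Sum>g\<in>A. bd A x g * \<phi> g)) - \<phi> f)
     else 0)"

definition pst :: "('v \<times> 'v) set \<Rightarrow> 'v set \<Rightarrow> ('v \<times> 'v \<Rightarrow> complex) \<Rightarrow> ('v \<times> 'v \<Rightarrow> complex) \<Rightarrow> nat \<Rightarrow> bool" where
  "pst A V \<Phi> \<Psi> \<tau> \<longleftrightarrow> \<Phi> \<noteq> \<Psi> \<and> \<tau> \<ge> 1 \<and>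
     (\<exists>\<gamma>. cmod \<gamma> = 1 \<and> (walk_U A V ^^ \<tau>) \<Phi> = (\<lambda>e. \<gamma> * \<Psi> e))"

text \<open>Circulant graph X(Z_n, S): vertices 0..n-1, S a set of residues in {0..n-1}.\<close>
definition circ_arcs :: "nat \<Rightarrow> int set \<Rightarrow> (nat \<times> nat) set" where
  "circ_arcs n S = {(x, y). x < n \<and> y < n \<and> (int y - int x) mod int n \<in> S}"

definition graph_connected :: "('v \<times> 'v) set \<Rightarrow> 'v set \<Rightarrow> bool" where
  "graph_connected A V \<longleftrightarrow> (\<forall>x\<in>V. \<forall>y\<in>V. (x, y) \<in> A\<^sup>*)"

end

theory Submission
  imports Defs
begin

(*
  Since b = l - a in Z_2l, the connection set is {a, a + l, -a, -a + l}. Hence antipodal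
  vertices x and x + l have the same neighbours, and every arc (u, v) has v - u congruent
  modulo l to exactly one of a and -a. Accordingly d*e_x is a quarter of W_a + W_-a + D,
  where W_s is the indicator of the arcs of direction s (mod l) whose head is congruent to
  x (mod l), and D is +1 on arcs into x and -1 on arcs into x + l. The walk translates W_s
  by s modulo l, and since x and x + l are twins it maps D to its reversal RD and RD to -D.
  So U^t d*e_x = d*e_(x+l) whenever l divides t and t = 2 (mod 4). Conversely, if a is
  coprime to l (which connectivity forces), the value of U^t d*e_x on an arc of direction a
  into x + l has modulus at most 1/4 < 1/2 unless t is even and divisible by l.
*)

definition head_lift :: "('v \<times> 'v) set \<Rightarrow> ('v \<Rightarrow> complex) \<Rightarrow> 'v \<times> 'v \<Rightarrow> complex" where
  "head_lift A f e = (if e \<in> A then f (snd e) else 0)"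

definition tail_lift :: "('v \<times> 'v) set \<Rightarrow> ('v \<Rightarrow> complex) \<Rightarrow> 'v \<times> 'v \<Rightarrow> complex" where
  "tail_lift A f e = (if e \<in> A then f (fst e) else 0)"

definition dipole :: "'v \<Rightarrow> 'v \<Rightarrow> 'v \<Rightarrow> complex" where
  "dipole x y z = (if z = x then 1 else 0) - (if z = y then 1 else 0)"

lemma walk_U_add: "walk_U A V (\<lambda>e. \<phi> e + \<psi> e) = (\<lambda>e. walk_U A V \<phi> e + walk_U A V \<psi> e)"
  unfolding walk_U_def Let_def by (simp add: sum.distrib algebra_simps fun_eq_iff)

lemma walk_U_scale: "walk_U A V (\<lambda>e. c * \<phi> e) = (\<lambda>e. c * walk_U A V \<phi> e)"
  unfolding walk_U_def Let_def by (simp add: sum_distrib_left algebra_simps fun_eq_iff)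

lemma walk_U_pow_add:
  "(walk_U A V ^^ n) (\<lambda>e. \<phi> e + \<psi> e) = (\<lambda>e. (walk_U A V ^^ n) \<phi> e + (walk_U A V ^^ n) \<psi> e)"
  by (induction n) (simp_all add: walk_U_add)

lemma walk_U_pow_scale: "(walk_U A V ^^ n) (\<lambda>e. c * \<phi> e) = (\<lambda>e. c * (walk_U A V ^^ n) \<phi> e)"
  by (induction n) (simp_all add: walk_U_scale)

lemma walk_U_outside: "e \<notin> A \<Longrightarrow> walk_U A V \<phi> e = 0"
  by (simp add: walk_U_def)

lemma walk_U_arc:
  assumes "finite V" "A \<subseteq> V \<times> V" "sym A" "(u, v) \<in> A"
  shows "walk_U A V \<phi> (u, v) =
           2 / of_nat (arc_deg A u) * (\<Sum>g\<in>{g \<in> A. snd g = u}. \<phi> g) - \<phi> (v, u)"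
proof -
  have vu: "(v, u) \<in> A" using assms(3,4) by (rule symD)
  have u: "u \<in> V" using assms(2,4) by auto
  have "finite A" using assms(1,2) by (simp add: finite_subset)
  then have deg_pos: "arc_deg A u > 0"
    unfolding arc_deg_def using vu by (auto simp: card_gt_0_iff)
  define r where "r = 1 / sqrt (real (arc_deg A u))"
  have r2: "complex_of_real r * complex_of_real r = 1 / of_nat (arc_deg A u)"
    using deg_pos by (simp add: r_def flip: of_real_mult)
  have inner: "(\<Sum>g\<in>A. bd A u g * \<phi> g) = r * (\<Sum>g\<in>{g \<in> A. snd g = u}. \<phi> g)"
  proof -
    have "(\<Sum>g\<in>A. bd A u g * \<phi> g) = (\<Sum>g\<in>A. if snd g = u then r * \<phi> g else 0)"
      by (intro sum.cong) (auto simp: bd_def r_def)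
    also have "\<dots> = r * (\<Sum>g\<in>{g \<in> A. snd g = u}. \<phi> g)"
      by (simp add: sum.inter_filter[OF \<open>finite A\<close>, symmetric] sum_distrib_left)
    finally show ?thesis .
  qed
  have outer: "(\<Sum>x\<in>V. cnj (bd A x (v, u)) * (\<Sum>g\<in>A. bd A x g * \<phi> g))
        = r * (\<Sum>g\<in>A. bd A u g * \<phi> g)"
  proof -
    have "(\<Sum>x\<in>V. cnj (bd A x (v, u)) * (\<Sum>g\<in>A. bd A x g * \<phi> g))
          = (\<Sum>x\<in>V. if x = u then r * (\<Sum>g\<in>A. bd A u g * \<phi> g) else 0)"
      using vu by (intro sum.cong) (auto simp: bd_def r_def)
    then show ?thesis using assms(1) u by simp
  qed
  have "walk_U A V \<phi> (u, v) =
          2 * (\<Sum>x\<in>V. cnj (bd A x (v, u)) * (\<Sum>g\<in>A. bd A x g * \<phi> g)) - \<phi> (v, u)"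
    using assms(4) by (simp add: walk_U_def Let_def)
  then show ?thesis
    unfolding outer inner by (simp add: r2 flip: mult.assoc)
qed

lemma sum_in_arcs_tail:
  assumes "finite A"
  shows "(\<Sum>g\<in>{g \<in> A. snd g = u}. f (fst g)) = (\<Sum>w\<in>{w. (w, u) \<in> A}. f w)"
proof -
  have "{g \<in> A. snd g = u} = (\<lambda>w. (w, u)) ` {w. (w, u) \<in> A}" by force
  moreover have "finite {w. (w, u) \<in> A}"
    using finite_imageI[OF assms, of fst] by (rule finite_subset[rotated]) force
  ultimately show ?thesis by (simp add: sum.reindex inj_on_def)
qed

lemma walk_U_head_lift:
  assumes "finite V" "A \<subseteq> V \<times> V" "sym A"
  shows "walk_U A V (head_lift A f) = tail_lift A f"
proof
  fix e
  show "walk_U A V (head_lift A f) e = tail_lift A f e"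
  proof (cases "e \<in> A")
    case True
    then obtain u v where e: "e = (u, v)" and uv: "(u, v) \<in> A" by (cases e) auto
    have "finite A" using assms(1,2) by (simp add: finite_subset)
    have vu: "(v, u) \<in> A" using assms(3) uv by (rule symD)
    then have deg: "of_nat (arc_deg A u) \<noteq> (0 :: complex)"
      using \<open>finite A\<close> by (auto simp: arc_deg_def card_eq_0_iff)
    have "(\<Sum>g\<in>{g \<in> A. snd g = u}. head_lift A f g) = (\<Sum>g\<in>{g \<in> A. snd g = u}. f (snd g))"
      by (rule sum.cong) (auto simp: head_lift_def)
    also have "\<dots> = of_nat (arc_deg A u) * f u"
      by (simp add: arc_deg_def)
    finally have in_sum: "(\<Sum>g\<in>{g \<in> A. snd g = u}. head_lift A f g) = of_nat (arc_deg A u) * f u" .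
    have "walk_U A V (head_lift A f) e =
            2 / of_nat (arc_deg A u) * (of_nat (arc_deg A u) * f u) - f u"
      unfolding e walk_U_arc[OF assms uv] in_sum using vu by (simp add: head_lift_def)
    then show ?thesis
      using deg uv by (simp add: e tail_lift_def)
  qed (simp add: walk_U_outside tail_lift_def)
qed

lemma walk_U_tail_lift_dipole:
  assumes "finite V" "A \<subseteq> V \<times> V" "sym A" and twins: "\<And>u. (x, u) \<in> A \<longleftrightarrow> (y, u) \<in> A"
  shows "walk_U A V (tail_lift A (dipole x y)) = (\<lambda>e. - head_lift A (dipole x y) e)"
proof
  fix e
  show "walk_U A V (tail_lift A (dipole x y)) e = - head_lift A (dipole x y) e"
  proof (cases "e \<in> A")
    case True
    then obtain u v where e: "e = (u, v)" and uv: "(u, v) \<in> A" by (cases e) auto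
    have "finite A" using assms(1,2) by (simp add: finite_subset)
    have fin: "finite {w. (w, u) \<in> A}"
      by (rule finite_subset[OF _ assms(1)]) (use assms(2) in auto)
    have vu: "(v, u) \<in> A" using assms(3) uv by (rule symD)
    have "(\<Sum>g\<in>{g \<in> A. snd g = u}. tail_lift A (dipole x y) g)
          = (\<Sum>g\<in>{g \<in> A. snd g = u}. dipole x y (fst g))"
      by (rule sum.cong) (auto simp: tail_lift_def)
    also have "\<dots> = (\<Sum>w\<in>{w. (w, u) \<in> A}. dipole x y w)"
      by (rule sum_in_arcs_tail[OF \<open>finite A\<close>])
    also have "\<dots> = 0"
      using twins[of u] fin by (simp add: dipole_def sum_subtractf)
    finally show ?thesis
      using vu uv by (simp add: e walk_U_arc[OF assms(1-3) uv] head_lift_def tail_lift_def)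
  qed (simp add: walk_U_outside head_lift_def)
qed

lemma walk_U_pow_quarter_turn:
  assumes "walk_U A V p = q" "walk_U A V q = (\<lambda>e. - p e)"
  shows "(walk_U A V ^^ n) p = (\<lambda>e. (-1) ^ (n div 2) * (if even n then p e else q e))"
proof (induction n)
  case (Suc n)
  show ?case
  proof (cases "even n")
    case True
    then show ?thesis
      using Suc.IH assms(1) by (simp add: walk_U_scale)
  next
    case False
    then have "Suc n div 2 = Suc (n div 2)" by presburger
    then show ?thesis
      using Suc.IH assms(2) False by (simp add: walk_U_scale)
  qed
qed simp

lemma circ_arcs_subset: "circ_arcs n S \<subseteq> {..<n} \<times> {..<n}"
  by (auto simp: circ_arcs_def)

lemma sym_circ_arcs:
  assumes "\<And>s. s \<in> S \<Longrightarrow> (- s) mod int n \<in> S"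
  shows "sym (circ_arcs n S)"
proof (rule symI)
  fix u v assume "(u, v) \<in> circ_arcs n S"
  then have "u < n" "v < n" "(- ((int v - int u) mod int n)) mod int n \<in> S"
    using assms by (auto simp: circ_arcs_def)
  then show "(v, u) \<in> circ_arcs n S"
    by (simp add: circ_arcs_def mod_minus_eq)
qed

lemma circ_in_arcs:
  assumes "S \<subseteq> {0..<int n}" "u < n"
  shows "{g \<in> circ_arcs n S. snd g = u} = (\<lambda>s. (nat ((int u - s) mod int n), u)) ` S"
proof (intro equalityI subsetI)
  fix g assume "g \<in> {g \<in> circ_arcs n S. snd g = u}"
  then obtain w where g: "g = (w, u)" and "w < n" and s: "(int u - int w) mod int n \<in> S"
    by (auto simp: circ_arcs_def)
  then have "nat ((int u - (int u - int w) mod int n) mod int n) = w"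
    by (simp add: mod_diff_right_eq)
  then show "g \<in> (\<lambda>s. (nat ((int u - s) mod int n), u)) ` S"
    using g s by force
next
  fix g assume "g \<in> (\<lambda>s. (nat ((int u - s) mod int n), u)) ` S"
  then obtain s where g: "g = (nat ((int u - s) mod int n), u)" and "s \<in> S" by auto
  have "0 \<le> s" "s < int n" using \<open>s \<in> S\<close> assms(1) by auto
  then have "(int u - (int u - s) mod int n) mod int n = s"
    by (simp add: mod_diff_right_eq)
  moreover have "nat ((int u - s) mod int n) < n" using assms(2) by (simp add: nat_less_iff)
  ultimately show "g \<in> {g \<in> circ_arcs n S. snd g = u}"
    using g \<open>s \<in> S\<close> assms(2) by (simp add: circ_arcs_def)
qed

lemma inj_on_circ_in_arc:
  assumes "S \<subseteq> {0..<int n}"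
  shows "inj_on (\<lambda>s. (nat ((int u - s) mod int n), u)) S"
proof (rule inj_onI)
  fix s t assume "s \<in> S" "t \<in> S"
    and "(nat ((int u - s) mod int n), u) = (nat ((int u - t) mod int n), u)"
  then have "(int u - (int u - s) mod int n) mod int n = (int u - (int u - t) mod int n) mod int n"
    using assms by (auto simp: eq_nat_nat_iff)
  moreover have "0 \<le> s" "s < int n" "0 \<le> t" "t < int n"
    using \<open>s \<in> S\<close> \<open>t \<in> S\<close> assms by auto
  ultimately show "s = t"
    by (simp add: mod_diff_right_eq)
qed

lemma arc_deg_circ_arcs:
  assumes "S \<subseteq> {0..<int n}" "u < n"
  shows "arc_deg (circ_arcs n S) u = card S"
  unfolding arc_deg_def circ_in_arcs[OF assms]
  using card_image[OF inj_on_circ_in_arc[OF assms(1)]] .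

lemma walk_U_circ_arcs:
  assumes "S \<subseteq> {0..<int n}" "\<And>s. s \<in> S \<Longrightarrow> (- s) mod int n \<in> S" "(u, v) \<in> circ_arcs n S"
  shows "walk_U (circ_arcs n S) {..<n} \<phi> (u, v) =
           2 / of_nat (card S) * (\<Sum>s\<in>S. \<phi> (nat ((int u - s) mod int n), u)) - \<phi> (v, u)"
proof -
  have u: "u < n" using assms(3) by (simp add: circ_arcs_def)
  show ?thesis
    using walk_U_arc[OF _ circ_arcs_subset sym_circ_arcs[OF assms(2)] assms(3)]
    by (simp add: arc_deg_circ_arcs[OF assms(1) u] circ_in_arcs[OF assms(1) u]
        sum.reindex[OF inj_on_circ_in_arc[OF assms(1)]])
qed

lemma circ_arcs_reach_dvd:
  assumes "g dvd int n" "\<And>s. s \<in> S \<Longrightarrow> g dvd s" "(u, v) \<in> (circ_arcs n S)\<^sup>*"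
  shows "g dvd int v - int u"
  using assms(3)
proof (induction rule: rtrancl_induct)
  case (step v w)
  then have "g dvd (int w - int v) mod int n"
    using assms(2) by (simp add: circ_arcs_def)
  then have "g dvd int w - int v"
    using assms(1) by (simp add: dvd_mod_iff)
  then show ?case
    using step.IH dvd_add by fastforce
qed simp

lemma graph_connected_circ_arcs_dvd_1:
  assumes "graph_connected (circ_arcs n S) {..<n}" "2 \<le> n"
    and "g dvd int n" "\<And>s. s \<in> S \<Longrightarrow> g dvd s"
  shows "g dvd 1"
  using circ_arcs_reach_dvd[OF assms(3,4), where u = 0 and v = 1] assms(1,2)
  by (simp add: graph_connected_def)

lemma dvd_mod_add_iff:
  fixes a b c d :: int
  assumes "c dvd b"
  shows "c dvd a mod b + d \<longleftrightarrow> c dvd a + d" and "c dvd a mod b - d \<longleftrightarrow> c dvd a - d"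
proof -
  have "c dvd a - a mod b" using assms dvd_minus_mod dvd_trans by blast
  moreover have "a + d = (a mod b + d) + (a - a mod b)" "a - d = (a mod b - d) + (a - a mod b)"
    by simp_all
  ultimately show "c dvd a mod b + d \<longleftrightarrow> c dvd a + d" "c dvd a mod b - d \<longleftrightarrow> c dvd a - d"
    by (metis dvd_add_left_iff)+
qed

lemma diff_mod_double_eq: "((t :: int) - m) mod (2 * m) = (t + m) mod (2 * m)"
proof -
  have "t + m = (t - m) + 2 * m" by simp
  then show ?thesis by (simp only: mod_add_self2)
qed

locale antipodal_circulant =
  fixes l :: nat and a b :: int and S :: "int set" and A :: "(nat \<times> nat) set"
  assumes S_def: "S = (\<lambda>t. t mod int (2 * l)) ` {a, - a, b, - b}"
    and A_def: "A = circ_arcs (2 * l) S"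
    and l_ge_2: "2 \<le> l"
    and card_S: "card S = 4"
    and a_plus_b: "(a + b) mod int (2 * l) = int l"
begin

lemma S_eq:
  "S = {a mod (2 * int l), (a + int l) mod (2 * int l),
        (- a) mod (2 * int l), (int l - a) mod (2 * int l)}"
proof -
  have "b mod (2 * int l) = ((a + b) mod (2 * int l) - a) mod (2 * int l)"
    by (simp add: mod_diff_left_eq)
  then have b: "b mod (2 * int l) = (int l - a) mod (2 * int l)"
    using a_plus_b by simp
  have "(- b) mod (2 * int l) = (a - (a + b) mod (2 * int l)) mod (2 * int l)"
    by (simp add: mod_diff_right_eq)
  also have "\<dots> = (a + int l - 2 * int l) mod (2 * int l)"
    using a_plus_b by simp
  also have "\<dots> = (a + int l) mod (2 * int l)"
    by (rule minus_mod_self2)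
  finally have minus_b: "(- b) mod (2 * int l) = (a + int l) mod (2 * int l)" .
  show ?thesis
    unfolding S_def using b minus_b by auto
qed

lemma S_distinct:
  "distinct [a mod (2 * int l), (a + int l) mod (2 * int l),
             (- a) mod (2 * int l), (int l - a) mod (2 * int l)]"
  by (rule card_distinct) (use card_S S_eq in simp)

lemma not_l_dvd_2a: "\<not> int l dvd 2 * a"
proof
  assume "int l dvd 2 * a"
  then obtain k where k: "2 * a = int l * k" by (elim dvdE)
  show False
  proof (cases "even k")
    case True
    then obtain j where "k = 2 * j" by (elim evenE)
    then have "a - (- a) = 2 * int l * j" using k by simp
    then have "a mod (2 * int l) = (- a) mod (2 * int l)"
      by (simp only: mod_eq_dvd_iff dvdI)
    then show False using S_distinct by simp
  next
    case False
    then obtain j where "k = 2 * j + 1" by (elim oddE)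
    then have "a - (int l - a) = 2 * int l * j" using k by (simp add: algebra_simps)
    then have "a mod (2 * int l) = (int l - a) mod (2 * int l)"
      by (simp only: mod_eq_dvd_iff dvdI)
    then show False using S_distinct by simp
  qed
qed

lemma sum_S:
  "(\<Sum>s\<in>S. f s) = f (a mod (2 * int l)) + f ((a + int l) mod (2 * int l))
                     + f ((- a) mod (2 * int l)) + f ((int l - a) mod (2 * int l))"
  using S_distinct by (simp add: S_eq add.assoc)

lemma S_subset: "S \<subseteq> {0..<2 * int l}"
  using l_ge_2 by (auto simp: S_eq)

lemma S_uminus: "s \<in> S \<Longrightarrow> (- s) mod (2 * int l) \<in> S"
  unfolding S_eq by (elim insertE) (simp_all add: mod_minus_eq diff_mod_double_eq)

lemma S_shift: "s \<in> S \<Longrightarrow> (s + int l) mod (2 * int l) \<in> S"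
proof -
  have "(t + int l + int l) mod (2 * int l) = t mod (2 * int l)" for t
    by (metis add.assoc mult_2 mod_add_self2)
  from this[of a] this[of "- a"] show "s \<in> S \<Longrightarrow> (s + int l) mod (2 * int l) \<in> S"
    unfolding S_eq by (elim insertE) (simp_all add: mod_add_left_eq)
qed

lemmas dvd_mod_double_iff = dvd_mod_add_iff[OF dvd_triv_right[of "int l" 2]]

lemma S_mod_l: "s \<in> S \<Longrightarrow> int l dvd s - a \<or> int l dvd s + a"
  unfolding S_eq by (elim insertE) (simp_all add: dvd_mod_double_iff)

lemma sym_A: "sym A"
  unfolding A_def by (rule sym_circ_arcs) (simp add: S_uminus)

lemma A_subset: "A \<subseteq> {..<2 * l} \<times> {..<2 * l}"
  unfolding A_def by (rule circ_arcs_subset)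

lemma arc_deg_A: "u < 2 * l \<Longrightarrow> arc_deg A u = 4"
  using arc_deg_circ_arcs[of S "2 * l" u] S_subset card_S by (simp add: A_def)

definition in_nbr :: "nat \<Rightarrow> int \<Rightarrow> nat" where
  "in_nbr u s = nat ((int u - s) mod (2 * int l))"

lemma in_nbr_arc: "s \<in> S \<Longrightarrow> u < 2 * l \<Longrightarrow> (in_nbr u s, u) \<in> A"
  using circ_in_arcs[of S "2 * l" u] S_subset by (auto simp: A_def in_nbr_def)

lemma dvd_in_nbr_iff: "int l dvd int u - int (in_nbr u s) - c \<longleftrightarrow> int l dvd s - c"
proof -
  have "int u - int (in_nbr u s) - c = (s - c) - ((int u - s) mod (2 * int l) - (int u - s))"
    using l_ge_2 by (simp add: in_nbr_def)
  moreover have "int l dvd (int u - s) mod (2 * int l) - (int u - s)"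
    by (simp add: dvd_mod_double_iff)
  ultimately show ?thesis
    by (simp only: dvd_diff_left_iff)
qed

lemma walk_U_arc_A:
  assumes "(u, v) \<in> A"
  shows "walk_U A {..<2 * l} \<phi> (u, v) = (\<Sum>s\<in>S. \<phi> (in_nbr u s, u)) / 2 - \<phi> (v, u)"
  using walk_U_circ_arcs[of S "2 * l" u v \<phi>] assms S_subset S_uminus card_S
  by (simp add: A_def in_nbr_def)

lemma arc_direction:
  assumes "(u, v) \<in> A"
  shows "int l dvd int v - int u + a \<longleftrightarrow> \<not> int l dvd int v - int u - a"
proof -
  have "(int v - int u) mod (2 * int l) \<in> S"
    using assms by (simp add: A_def circ_arcs_def)
  from S_mod_l[OF this] have "int l dvd int v - int u - a \<or> int l dvd int v - int u + a"
    by (simp add: dvd_mod_double_iff)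
  moreover have "\<not> (int l dvd int v - int u - a \<and> int l dvd int v - int u + a)"
    using not_l_dvd_2a dvd_diff[of "int l" "int v - int u + a" "int v - int u - a"] by auto
  ultimately show ?thesis by blast
qed

lemma sum_S_dvd:
  assumes "\<sigma> = a \<or> \<sigma> = - a"
  shows "(\<Sum>s\<in>S. if int l dvd s - \<sigma> then 1 else 0 :: complex) = 2"
proof -
  have "\<not> int l dvd int l - 2 * a"
    using not_l_dvd_2a by (simp add: dvd_diff_right_iff)
  then show ?thesis
    using assms not_l_dvd_2a by (auto simp: sum_S dvd_mod_double_iff)
qed

definition wave :: "int \<Rightarrow> int \<Rightarrow> nat \<times> nat \<Rightarrow> complex" where
  "wave c \<sigma> e = (if e \<in> A \<and> int l dvd int (snd e) - c \<and> int l dvd int (snd e) - int (fst e) - \<sigma>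
                  then 1 else 0)"

lemma wave_cong:
  assumes "int l dvd c - c'"
  shows "wave c \<sigma> = wave c' \<sigma>"
proof -
  have "int l dvd y - c \<longleftrightarrow> int l dvd y - c'" for y
  proof -
    have "y - c = (y - c') + - (c - c')" by simp
    then show ?thesis using assms by (simp only: dvd_add_left_iff dvd_minus_iff)
  qed
  then show ?thesis by (simp add: wave_def fun_eq_iff)
qed

lemma walk_U_wave:
  assumes \<sigma>: "\<sigma> = a \<or> \<sigma> = - a"
  shows "walk_U A {..<2 * l} (wave c \<sigma>) = wave (c + \<sigma>) \<sigma>"
proof
  fix e
  show "walk_U A {..<2 * l} (wave c \<sigma>) e = wave (c + \<sigma>) \<sigma> e"
  proof (cases "e \<in> A")
    case True
    then obtain u v where e: "e = (u, v)" and uv: "(u, v) \<in> A" by (cases e) auto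
    have u: "u < 2 * l" using uv A_subset by auto
    have vu: "(v, u) \<in> A" using sym_A uv by (rule symD)
    have "(\<Sum>s\<in>S. wave c \<sigma> (in_nbr u s, u))
          = (\<Sum>s\<in>S. if int l dvd int u - c then (if int l dvd s - \<sigma> then 1 else 0) else 0)"
      by (rule sum.cong) (simp_all add: wave_def in_nbr_arc[OF _ u] dvd_in_nbr_iff)
    also have "\<dots> = (if int l dvd int u - c then 2 else 0)"
      using sum_S_dvd[OF \<sigma>] by simp
    finally have in_sum:
      "(\<Sum>s\<in>S. wave c \<sigma> (in_nbr u s, u)) = (if int l dvd int u - c then 2 else 0)" .
    have "int u - int v - \<sigma> = - (int v - int u + \<sigma>)" by simp
    then have "int l dvd int u - int v - \<sigma> \<longleftrightarrow> int l dvd int v - int u + \<sigma>"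
      by (simp only: dvd_minus_iff)
    then have "int l dvd int u - int v - \<sigma> \<longleftrightarrow> \<not> int l dvd int v - int u - \<sigma>"
      using arc_direction[OF uv] \<sigma> by auto
    moreover have "int l dvd int v - (c + \<sigma>) \<longleftrightarrow> int l dvd int u - c"
      if "int l dvd int v - int u - \<sigma>"
    proof -
      have "int v - (c + \<sigma>) = (int v - int u - \<sigma>) + (int u - c)" by simp
      then show ?thesis using that by (simp only: dvd_add_right_iff)
    qed
    moreover have "walk_U A {..<2 * l} (wave c \<sigma>) e =
                     (if int l dvd int u - c then 2 else 0) / 2 - wave c \<sigma> (v, u)"
      unfolding e walk_U_arc_A[OF uv] in_sum ..
    ultimately show ?thesis
      using uv vu by (auto simp: e wave_def)
  qed (simp add: walk_U_outside wave_def)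
qed

lemma walk_U_pow_wave:
  assumes "\<sigma> = a \<or> \<sigma> = - a"
  shows "(walk_U A {..<2 * l} ^^ n) (wave c \<sigma>) = wave (c + int n * \<sigma>) \<sigma>"
proof (induction n)
  case (Suc n)
  have "(walk_U A {..<2 * l} ^^ Suc n) (wave c \<sigma>) = walk_U A {..<2 * l} (wave (c + int n * \<sigma>) \<sigma>)"
    using Suc.IH by simp
  also have "\<dots> = wave (c + int n * \<sigma> + \<sigma>) \<sigma>"
    by (rule walk_U_wave[OF assms])
  also have "c + int n * \<sigma> + \<sigma> = c + int (Suc n) * \<sigma>"
    by (simp add: algebra_simps)
  finally show ?case .
qed simp

lemma wave_pair:
  "wave c a e + wave c (- a) e = (if e \<in> A \<and> int l dvd int (snd e) - c then 1 else 0)"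
  using arc_direction[of "fst e" "snd e"] by (auto simp: wave_def)

abbreviation antipode :: "nat \<Rightarrow> nat" where
  "antipode x \<equiv> (x + l) mod (2 * l)"

lemma antipode_lt: "antipode x < 2 * l"
  using l_ge_2 by simp

lemma antipode_neq: "x < 2 * l \<Longrightarrow> antipode x \<noteq> x"
  using l_ge_2 by (auto simp: mod_if split: if_splits)

lemma dvd_antipode_iff:
  assumes "x < 2 * l" "v < 2 * l"
  shows "int l dvd int v - int x \<longleftrightarrow> v = x \<or> v = antipode x"
proof
  assume "int l dvd int v - int x"
  then obtain k where k: "int v - int x = int l * k" by (elim dvdE)
  have "int l * k < int l * 2" "int l * (- 2) < int l * k"
    using assms k by linarith+
  moreover have "0 < int l" using l_ge_2 by simp
  ultimately have "k < 2" "- 2 < k"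
    using mult_less_cancel_left_pos by blast+
  then have "k = 0 \<or> k = 1 \<or> k = - 1" by linarith
  then show "v = x \<or> v = antipode x"
    using assms k by (auto simp: mod_if)
next
  assume "v = x \<or> v = antipode x"
  then show "int l dvd int v - int x"
    using assms by (auto simp: mod_if)
qed

lemma antipode_twin:
  assumes "x < 2 * l"
  shows "(x, u) \<in> A \<longleftrightarrow> (antipode x, u) \<in> A"
proof -
  define t where "t = (int u - int x) mod (2 * int l)"
  have "int (antipode x) = (int x + int l) mod (2 * int l)"
    by (simp add: of_nat_mod)
  then have "(int u - int (antipode x)) mod (2 * int l) = (int u - (int x + int l)) mod (2 * int l)"
    by (simp only: mod_diff_right_eq)
  also have "\<dots> = (int u - int x + int l) mod (2 * int l)"
    by (simp only: diff_diff_eq[symmetric] diff_mod_double_eq)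
  also have "\<dots> = (t + int l) mod (2 * int l)"
    by (simp only: t_def mod_add_left_eq)
  finally have shift: "(int u - int (antipode x)) mod (2 * int l) = (t + int l) mod (2 * int l)" .
  have "((t + int l) mod (2 * int l) + int l) mod (2 * int l) = (t + 2 * int l) mod (2 * int l)"
    by (simp add: mod_add_left_eq add.assoc)
  then have shift_twice: "((t + int l) mod (2 * int l) + int l) mod (2 * int l) = t"
    by (simp add: t_def)
  have "(x, u) \<in> A \<longleftrightarrow> u < 2 * l \<and> t \<in> S"
    using assms by (simp add: A_def circ_arcs_def t_def)
  moreover have "(antipode x, u) \<in> A \<longleftrightarrow> u < 2 * l \<and> (t + int l) mod (2 * int l) \<in> S"
    using antipode_lt[of x] unfolding A_def circ_arcs_def mem_Collect_eq case_prod_conv of_nat_mult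
      of_nat_numeral shift by simp
  ultimately show ?thesis
    using S_shift[of t] S_shift[of "(t + int l) mod (2 * int l)"] shift_twice by auto
qed

lemma dstar_e_eq: "x < 2 * l \<Longrightarrow> dstar_e A x e = (if e \<in> A \<and> snd e = x then 1 / 2 else 0)"
  by (simp add: dstar_e_def bd_def arc_deg_A)

text \<open>Stated right-nested so that it unfolds directly against walk_U_pow_scale and walk_U_pow_add.\<close>

lemma dstar_e_split:
  assumes "x < 2 * l"
  shows "dstar_e A x =
           (\<lambda>e. 1 / 4 * (wave x a e + (wave x (- a) e + head_lift A (dipole x (antipode x)) e)))"
    and "dstar_e A (antipode x) =
           (\<lambda>e. 1 / 4 * (wave x a e + (wave x (- a) e + - head_lift A (dipole x (antipode x)) e)))"
proof -
  have pair: "wave x a e + wave x (- a) e =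
                (if e \<in> A \<and> (snd e = x \<or> snd e = antipode x) then 1 else 0)" for e
    using wave_pair[of x e] A_subset dvd_antipode_iff[OF assms, of "snd e"] by auto
  show "dstar_e A x =
          (\<lambda>e. 1 / 4 * (wave x a e + (wave x (- a) e + head_lift A (dipole x (antipode x)) e)))"
    unfolding add.assoc[symmetric] pair
    using antipode_neq[OF assms] assms
    by (auto simp: fun_eq_iff dstar_e_eq head_lift_def dipole_def)
  show "dstar_e A (antipode x) =
          (\<lambda>e. 1 / 4 * (wave x a e + (wave x (- a) e + - head_lift A (dipole x (antipode x)) e)))"
    unfolding add.assoc[symmetric] pair
    using antipode_neq[OF assms] antipode_lt
    by (auto simp: fun_eq_iff dstar_e_eq head_lift_def dipole_def)
qed

lemma walk_U_pow_dipole: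
  assumes "x < 2 * l"
  shows "(walk_U A {..<2 * l} ^^ n) (head_lift A (dipole x (antipode x))) =
           (\<lambda>e. (- 1) ^ (n div 2) * (if even n then head_lift A (dipole x (antipode x)) e
                                               else tail_lift A (dipole x (antipode x)) e))"
  using antipode_twin[OF assms]
  by (intro walk_U_pow_quarter_turn walk_U_head_lift walk_U_tail_lift_dipole A_subset sym_A) auto

lemma walk_U_pow_dstar_e:
  assumes "x < 2 * l"
  shows "(walk_U A {..<2 * l} ^^ n) (dstar_e A x) =
           (\<lambda>e. 1 / 4 * (wave (int x + int n * a) a e + (wave (int x - int n * a) (- a) e
              + (- 1) ^ (n div 2) * (if even n then head_lift A (dipole x (antipode x)) e
                                       else tail_lift A (dipole x (antipode x)) e))))"
  unfolding dstar_e_split(1)[OF assms] walk_U_pow_scale walk_U_pow_add walk_U_pow_dipole[OF assms]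
  by (simp add: walk_U_pow_wave)

lemma dstar_e_antipode_neq: "x < 2 * l \<Longrightarrow> dstar_e A x \<noteq> dstar_e A (antipode x)"
proof
  assume x: "x < 2 * l" and eq: "dstar_e A x = dstar_e A (antipode x)"
  have "a mod (2 * int l) \<in> S" by (simp add: S_eq)
  then have "(in_nbr x (a mod (2 * int l)), x) \<in> A" using x by (rule in_nbr_arc)
  then show False
    using fun_cong[OF eq, of "(in_nbr x (a mod (2 * int l)), x)"] x antipode_neq[OF x] antipode_lt
    by (simp add: dstar_e_eq)
qed

lemma pst_antipode:
  assumes x: "x < 2 * l" and "l dvd \<tau>" "\<tau> mod 4 = 2"
  shows "pst A {..<2 * l} (dstar_e A x) (dstar_e A (antipode x)) \<tau>"
proof -
  have "int l dvd int \<tau> * a" using \<open>l dvd \<tau>\<close> by simp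
  then have "wave (int x + int \<tau> * a) a = wave x a" "wave (int x - int \<tau> * a) (- a) = wave x (- a)"
    by (simp_all add: wave_cong)
  moreover have "even \<tau>" "odd (\<tau> div 2)" using \<open>\<tau> mod 4 = 2\<close> by presburger+
  ultimately have "(walk_U A {..<2 * l} ^^ \<tau>) (dstar_e A x) = dstar_e A (antipode x)"
    by (simp add: walk_U_pow_dstar_e[OF x] dstar_e_split(2)[OF x])
  moreover have "\<tau> \<ge> 1" using \<open>\<tau> mod 4 = 2\<close> by presburger
  ultimately show ?thesis
    using dstar_e_antipode_neq[OF x] by (auto simp: pst_def intro!: exI[of _ 1])
qed

lemma walk_U_pow_dstar_e_probe:
  assumes x: "x < 2 * l" and cop: "coprime (int l) a"
  defines "w \<equiv> in_nbr (antipode x) (a mod (2 * int l))"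
  shows "(w, antipode x) \<in> A"
    and "(walk_U A {..<2 * l} ^^ \<tau>) (dstar_e A x) (w, antipode x) =
           1 / 4 * ((if l dvd \<tau> then 1 else 0) + (- 1) ^ (\<tau> div 2) * (if even \<tau> then - 1 else 0))"
proof -
  define y where "y = antipode x"
  have y: "y < 2 * l" "y \<noteq> x" using antipode_lt antipode_neq[OF x] by (simp_all add: y_def)
  show arc: "(w, antipode x) \<in> A"
    unfolding w_def using antipode_lt by (intro in_nbr_arc) (simp add: S_eq)
  have dir: "int l dvd int y - int w - a"
    unfolding w_def y_def dvd_in_nbr_iff by (simp add: dvd_mod_double_iff)
  have yx: "int l dvd int y - int x" using dvd_antipode_iff[OF x y(1)] by (simp add: y_def)
  have not_dvd_a: "\<not> int l dvd a" using not_l_dvd_2a by auto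
  have "w \<noteq> y"
  proof
    assume "w = y"
    then show False using dir not_dvd_a by simp
  qed
  have "w \<noteq> x"
  proof
    assume "w = x"
    then have "int l dvd (int y - int x) - (int y - int x - a)"
      using dir yx by (simp only: dvd_diff)
    then show False using not_dvd_a by simp
  qed
  have "\<not> int l dvd int y - int w + a" using arc_direction[OF arc] dir by (simp add: y_def)
  then have wave_minus: "wave (int x - int \<tau> * a) (- a) (w, y) = 0"
    by (simp add: wave_def)
  have "int y - (int x + int \<tau> * a) = (int y - int x) - int \<tau> * a" by simp
  then have "int l dvd int y - (int x + int \<tau> * a) \<longleftrightarrow> int l dvd int \<tau> * a"
    by (simp only: dvd_diff_right_iff[OF yx])
  also have "\<dots> \<longleftrightarrow> l dvd \<tau>"
    using cop by (simp add: coprime_dvd_mult_left_iff)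
  finally have wave_plus: "wave (int x + int \<tau> * a) a (w, y) = (if l dvd \<tau> then 1 else 0)"
    using arc dir by (simp add: wave_def y_def)
  have head: "head_lift A (dipole x y) (w, y) = - 1"
    using arc y(2) by (simp add: head_lift_def dipole_def y_def)
  have tail: "tail_lift A (dipole x y) (w, y) = 0"
    using arc \<open>w \<noteq> x\<close> \<open>w \<noteq> y\<close> by (simp add: tail_lift_def dipole_def y_def)
  show "(walk_U A {..<2 * l} ^^ \<tau>) (dstar_e A x) (w, antipode x) =
          1 / 4 * ((if l dvd \<tau> then 1 else 0) + (- 1) ^ (\<tau> div 2) * (if even \<tau> then - 1 else 0))"
    unfolding walk_U_pow_dstar_e[OF x] y_def[symmetric] wave_plus wave_minus head tail add_0_left ..
qed

lemma not_pst_antipode: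
  assumes x: "x < 2 * l" and cop: "coprime (int l) a" and \<tau>: "\<not> (even \<tau> \<and> l dvd \<tau>)"
  shows "\<not> pst A {..<2 * l} (dstar_e A x) (dstar_e A (antipode x)) \<tau>"
proof
  assume "pst A {..<2 * l} (dstar_e A x) (dstar_e A (antipode x)) \<tau>"
  then obtain \<gamma> where "cmod \<gamma> = 1"
    and evo: "(walk_U A {..<2 * l} ^^ \<tau>) (dstar_e A x) = (\<lambda>e. \<gamma> * dstar_e A (antipode x) e)"
    unfolding pst_def by blast
  define w where "w = in_nbr (antipode x) (a mod (2 * int l))"
  define z where "z = (walk_U A {..<2 * l} ^^ \<tau>) (dstar_e A x) (w, antipode x)"
  have "cmod z \<le> 1 / 4"
  proof (cases "even \<tau>")
    case True
    then have "z * 4 = - ((- 1) ^ (\<tau> div 2))"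
      using walk_U_pow_dstar_e_probe(2)[OF x cop, of \<tau>] \<tau> by (simp add: z_def w_def)
    then have "cmod (z * 4) = 1" by (simp add: norm_power)
    then show ?thesis by (simp add: norm_mult)
  next
    case False
    then have "z * 4 = (if l dvd \<tau> then 1 else 0)"
      using walk_U_pow_dstar_e_probe(2)[OF x cop, of \<tau>] by (simp add: z_def w_def)
    then have "cmod (z * 4) \<le> 1" by simp
    then show ?thesis by (simp add: norm_mult)
  qed
  moreover have "cmod z = 1 / 2"
    using walk_U_pow_dstar_e_probe(1)[OF x cop] antipode_lt \<open>cmod \<gamma> = 1\<close>
    by (simp add: z_def w_def evo dstar_e_eq norm_mult)
  ultimately show False by simp
qed

lemma coprime_of_connected:
  assumes "graph_connected A {..<2 * l}"
  shows "coprime (int l) a"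
proof -
  have "gcd (int l) a dvd 2 * int l" by simp
  then have "gcd (int l) a dvd s" if "s \<in> S" for s
    using that unfolding S_eq by (elim insertE) (auto intro!: dvd_mod)
  moreover have "graph_connected (circ_arcs (2 * l) S) {..<2 * l}" "2 \<le> 2 * l"
    using assms l_ge_2 by (simp_all add: A_def)
  ultimately have "gcd (int l) a dvd 1"
    using graph_connected_circ_arcs_dvd_1[of "2 * l" S "gcd (int l) a"] by simp
  then show ?thesis using is_unit_gcd by blast
qed

end

theorem lemma8p1:
  fixes l :: nat and a b :: int
  defines "S \<equiv> (\<lambda>t. t mod int (2 * l)) ` {a, - a, b, - b}"
  defines "A \<equiv> circ_arcs (2 * l) S"
  assumes "l \<ge> 2"
    and "card S = 4" and "0 \<notin> S"
    and "(a + b) mod int (2 * l) = int l"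
    and "\<not> 4 dvd l"
  shows "(l mod 4 = 2 \<longrightarrow>
            (\<forall>x < 2 * l. pst A {..<2 * l} (dstar_e A x) (dstar_e A ((x + l) mod (2 * l))) l))
       \<and> (odd l \<longrightarrow>
            (\<forall>x < 2 * l. pst A {..<2 * l} (dstar_e A x) (dstar_e A ((x + l) mod (2 * l))) (2 * l)))
       \<and> (graph_connected A {..<2 * l} \<longrightarrow>
            (l mod 4 = 2 \<longrightarrow> (\<forall>x < 2 * l. \<forall>\<tau>. 1 \<le> \<tau> \<and> \<tau> < l \<longrightarrow>
                 \<not> pst A {..<2 * l} (dstar_e A x) (dstar_e A ((x + l) mod (2 * l))) \<tau>))
          \<and> (odd l \<longrightarrow> (\<forall>x < 2 * l. \<forall>\<tau>. 1 \<le> \<tau> \<and> \<tau> < 2 * l \<longrightarrow>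
                 \<not> pst A {..<2 * l} (dstar_e A x) (dstar_e A ((x + l) mod (2 * l))) \<tau>)))"
proof -
  interpret antipodal_circulant l a b S A
    using \<open>l \<ge> 2\<close> \<open>card S = 4\<close> \<open>(a + b) mod int (2 * l) = int l\<close>
    by unfold_locales (simp_all add: S_def A_def)
  have too_early: "\<not> (even \<tau> \<and> l dvd \<tau>)"
    if "1 \<le> \<tau>" and "(l mod 4 = 2 \<and> \<tau> < l) \<or> (odd l \<and> \<tau> < 2 * l)" for \<tau>
  proof
    assume "even \<tau> \<and> l dvd \<tau>"
    then obtain k where k: "\<tau> = l * k" and "even \<tau>" by blast
    then have "0 < k" "l * k < l * 2" using that by (auto simp: mult.commute)
    then have "k = 1" by simp
    then show False using that k \<open>even \<tau>\<close> by auto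
  qed
  have "l dvd l" "l dvd 2 * l" by simp_all
  moreover have "odd l \<Longrightarrow> (2 * l) mod 4 = 2" by presburger
  ultimately show ?thesis
    using pst_antipode not_pst_antipode[OF _ coprime_of_connected] too_early by blast
qed

end
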